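(* Let $\tau$ be a $\sigma$-maxitive measure on a $\sigma$-algebra $\mathcal{B}$ of subsets of a nonempty set $E$. Then the following are equivalent: - $\tau$ has the Radon–Nikodym property with respect to the Shilkret integral, i.e. every $\sigma$-maxitive measure $\nu$ on $\mathcal{B}$ with $\nu\ll\tau$ admits a $\mathcal{B}$-measurable $c:E\to[0,\infty]$ with $\nu(B)=\sup_{t\ge0} t\cdot\tau(B\cap\{c>t\})$ for all $B\in\mathcal{B}$; - $\tau$ is $\sigma$-finite and $\sigma$-principal.
   Context: Multiplication on $[0,\infty]$ is the usual one, with the convention $0\cdot\infty=\infty\cdot0=0$. A $\sigma$-maxitive measure on $\mathcal{B}$ is a map $\nu:\mathcal{B}\to[0,\infty]$ with $\nu(\emptyset)=0$ and $\nu(\bigcup_j B_j)=\sup_j\nu(B_j)$ for every countable family $(B_j)$ in $\mathcal{B}$. A map $f:E\to[0,\infty]$ is $\mathcal{B}$-measurable if $\{f>t\}\in\mathcal{B}$ for all $t\in[0,\infty)$. Absolute continuity: $\nu\ll\tau$ means $\nu(B)\le\infty\cdot\tau(B)$ for every $B\in\mathcal{B}$ with $\tau(B)<\infty$; equivalently, $\tau(B)=0$ implies $\nu(B)=0$ for such $B$. $\tau$ is $\sigma$-finite if $E$ is covered by countably many $B_n\in\mathcal{B}$ with $\tau(B_n)<\infty$. A $\sigma$-ideal of $\mathcal{B}$ is a nonempty subfamily closed under countable unions and under passing to measurable subsets. A set is $\tau$-negligible if it is contained in some $B\in\mathcal{B}$ with $\tau(B)=0$. $\tau$ is $\sigma$-principal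 if for every $\sigma$-ideal $\mathcal{I}$ of $\mathcal{B}$ there is $L\in\mathcal{I}$ such that $S\setminus L$ is $\tau$-negligible for all $S\in\mathcal{I}$. *)

theory Defs
  imports "HOL-Analysis.Analysis"
begin

text \<open>Set functions take values in ennreal = [0,\<infinity>], where 0 * \<infinity> = 0.
  The \<sigma>-algebra is a family M of subsets of the ground set E.\<close>

definition sigma_maxitive :: "'a set set \<Rightarrow> ('a set \<Rightarrow> ennreal) \<Rightarrow> bool" where
  "sigma_maxitive M \<nu> \<longleftrightarrow> \<nu> {} = 0 \<and>
     (\<forall>F :: nat \<Rightarrow> 'a set. range F \<subseteq> M \<longrightarrow> \<nu> (\<Union>j. F j) = (SUP j. \<nu> (F j)))"

definition abs_cont :: "'a set set \<Rightarrow> ('a set \<Rightarrow> ennreal) \<Rightarrow> ('a set \<Rightarrow> ennreal) \<Rightarrow> bool" where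
  "abs_cont M \<nu> \<tau> \<longleftrightarrow> (\<forall>B\<in>M. \<tau> B < \<infinity> \<longrightarrow> \<nu> B \<le> \<infinity> * \<tau> B)"

definition maxitive_measurable :: "'a set \<Rightarrow> 'a set set \<Rightarrow> ('a \<Rightarrow> ennreal) \<Rightarrow> bool" where
  "maxitive_measurable E M f \<longleftrightarrow> (\<forall>t::ennreal. t < \<infinity> \<longrightarrow> {x\<in>E. t < f x} \<in> M)"

definition shilkret :: "'a set \<Rightarrow> ('a set \<Rightarrow> ennreal) \<Rightarrow> ('a \<Rightarrow> ennreal) \<Rightarrow> 'a set \<Rightarrow> ennreal" where
  "shilkret E \<tau> c B = (SUP t\<in>{t::ennreal. t < \<infinity>}. t * \<tau> (B \<inter> {x\<in>E. t < c x}))"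

definition radon_nikodym_property :: "'a set \<Rightarrow> 'a set set \<Rightarrow> ('a set \<Rightarrow> ennreal) \<Rightarrow> bool" where
  "radon_nikodym_property E M \<tau> \<longleftrightarrow>
     (\<forall>\<nu>. sigma_maxitive M \<nu> \<and> abs_cont M \<nu> \<tau> \<longrightarrow>
        (\<exists>c. maxitive_measurable E M c \<and> (\<forall>B\<in>M. \<nu> B = shilkret E \<tau> c B)))"

definition maxitive_sigma_finite :: "'a set \<Rightarrow> 'a set set \<Rightarrow> ('a set \<Rightarrow> ennreal) \<Rightarrow> bool" where
  "maxitive_sigma_finite E M \<tau> \<longleftrightarrow>
     (\<exists>F :: nat \<Rightarrow> 'a set. range F \<subseteq> M \<and> (\<forall>n. \<tau> (F n) < \<infinity>) \<and> E \<subseteq> (\<Union>n. F n))"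

definition sigma_ideal :: "'a set set \<Rightarrow> 'a set set \<Rightarrow> bool" where
  "sigma_ideal M I \<longleftrightarrow> I \<subseteq> M \<and> I \<noteq> {} \<and>
     (\<forall>F :: nat \<Rightarrow> 'a set. range F \<subseteq> I \<longrightarrow> (\<Union>j. F j) \<in> I) \<and>
     (\<forall>S\<in>I. \<forall>T\<in>M. T \<subseteq> S \<longrightarrow> T \<in> I)"

definition negligible_wrt :: "'a set set \<Rightarrow> ('a set \<Rightarrow> ennreal) \<Rightarrow> 'a set \<Rightarrow> bool" where
  "negligible_wrt M \<tau> S \<longleftrightarrow> (\<exists>B\<in>M. \<tau> B = 0 \<and> S \<subseteq> B)"

definition sigma_principal :: "'a set set \<Rightarrow> ('a set \<Rightarrow> ennreal) \<Rightarrow> bool" where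
  "sigma_principal M \<tau> \<longleftrightarrow>
     (\<forall>I. sigma_ideal M I \<longrightarrow> (\<exists>L\<in>I. \<forall>S\<in>I. negligible_wrt M \<tau> (S - L)))"

end

(*
  Necessity. For a sigma-ideal I of M containing the tau-null sets, the set function that
  vanishes on I and equals 1 elsewhere is sigma-maxitive and absolutely continuous w.r.t. tau.
  A Shilkret density c for it characterises I as the sets B with tau(B \<inter> {c > 0}) = 0.
  Taking for I the sets of sigma-finite measure shows that E is in I, because the levels
  {c > 1/n} have measure at most n. Taking for I the sets contained in a member of a given
  ideal up to a null set, the complement of {c > 0} yields an essential supremum of that ideal.

  Sufficiency. For each rational q > 0 the sets on which nu \<le> q * tau holds hereditarily
  form a sigma-ideal; sigma-principality provides an essential union L_q of it, and the
  density is c x = inf {q. x \<in> L_q}. Then nu \<le> r * tau on {c < r}, which bounds nu by the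
  Shilkret integral of c (up to a factor arbitrarily close to 1, using sigma-finiteness on
  {c = 0}); conversely t * tau \<le> nu on {c > t}, by a second use of sigma-principality.
*)

theory Submission
  imports Defs
begin


section \<open>\<sigma>-maxitive measures, negligible sets and \<sigma>-ideals\<close>

lemma sigma_maxitive_empty: "sigma_maxitive M \<nu> \<Longrightarrow> \<nu> {} = 0"
  by (simp add: sigma_maxitive_def)

lemma sigma_maxitive_UN:
  fixes F :: "nat \<Rightarrow> 'a set"
  assumes "sigma_maxitive M \<nu>" "range F \<subseteq> M"
  shows "\<nu> (\<Union>j. F j) = (SUP j. \<nu> (F j))"
proof -
  have "\<forall>F :: nat \<Rightarrow> 'a set. range F \<subseteq> M \<longrightarrow> \<nu> (\<Union>j. F j) = (SUP j. \<nu> (F j))"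
    using assms(1) unfolding sigma_maxitive_def by (rule conjunct2)
  then show ?thesis using assms(2) by blast
qed

lemma sigma_maxitive_Un:
  assumes "sigma_maxitive M \<nu>" "A \<in> M" "B \<in> M"
  shows "\<nu> (A \<union> B) = max (\<nu> A) (\<nu> B)"
proof -
  define F where "F j = (if j = 0 then A else B)" for j :: nat
  have F: "range F \<subseteq> M" using assms(2,3) by (simp add: F_def image_subset_iff)
  have union: "(\<Union>j. F j) = A \<union> B" by (auto simp: F_def)
  have sup: "(SUP j. \<nu> (F j)) = max (\<nu> A) (\<nu> B)"
  proof (rule antisym)
    show "(SUP j. \<nu> (F j)) \<le> max (\<nu> A) (\<nu> B)" by (rule SUP_least) (simp add: F_def)
    show "max (\<nu> A) (\<nu> B) \<le> (SUP j. \<nu> (F j))"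
      using SUP_upper[of 0 UNIV "\<lambda>j. \<nu> (F j)"] SUP_upper[of 1 UNIV "\<lambda>j. \<nu> (F j)"]
      by (simp add: F_def)
  qed
  show ?thesis using sigma_maxitive_UN[OF assms(1) F] unfolding union sup .
qed

lemma sigma_maxitive_mono:
  "sigma_maxitive M \<nu> \<Longrightarrow> A \<in> M \<Longrightarrow> B \<in> M \<Longrightarrow> A \<subseteq> B \<Longrightarrow> \<nu> A \<le> \<nu> B"
  using sigma_maxitive_Un[of M \<nu> A B] max.cobounded1[of "\<nu> A" "\<nu> B"] by (simp add: Un_absorb1)

lemma sigma_maxitive_countable_UN_le:
  assumes \<nu>: "sigma_maxitive M \<nu>" and K: "countable K"
    and G: "\<And>k. k \<in> K \<Longrightarrow> G k \<in> M" "\<And>k. k \<in> K \<Longrightarrow> \<nu> (G k) \<le> s"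
  shows "\<nu> (\<Union>k\<in>K. G k) \<le> s"
proof (cases "K = {}")
  case True
  then show ?thesis using sigma_maxitive_empty[OF \<nu>] by simp
next
  case False
  have "(\<Union>k\<in>K. G k) = (\<Union>n. G (from_nat_into K n))"
    by (metis False K image_image range_from_nat_into)
  moreover have "\<nu> (\<Union>n. G (from_nat_into K n)) = (SUP n. \<nu> (G (from_nat_into K n)))"
    using G(1) from_nat_into[OF False] by (intro sigma_maxitive_UN[OF \<nu>]) auto
  moreover have "(SUP n. \<nu> (G (from_nat_into K n))) \<le> s"
    using G(2) from_nat_into[OF False] by (intro SUP_least) blast
  ultimately show ?thesis by simp
qed

lemma abs_contD: "abs_cont M \<nu> \<tau> \<Longrightarrow> B \<in> M \<Longrightarrow> \<tau> B = 0 \<Longrightarrow> \<nu> B = 0"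
  unfolding abs_cont_def by force

lemma negligible_wrtI: "B \<in> M \<Longrightarrow> \<tau> B = 0 \<Longrightarrow> negligible_wrt M \<tau> B"
  unfolding negligible_wrt_def by blast

lemma negligible_wrt_subset: "negligible_wrt M \<tau> A \<Longrightarrow> B \<subseteq> A \<Longrightarrow> negligible_wrt M \<tau> B"
  unfolding negligible_wrt_def by blast

lemma negligible_wrt_null: "sigma_maxitive M \<tau> \<Longrightarrow> X \<in> M \<Longrightarrow> negligible_wrt M \<tau> X \<Longrightarrow> \<tau> X = 0"
  unfolding negligible_wrt_def by (metis le_zero_eq sigma_maxitive_mono)

lemma (in sigma_algebra) negligible_wrt_UN:
  assumes "sigma_maxitive M \<tau>" "\<And>j::nat. negligible_wrt M \<tau> (A j)"
  shows "negligible_wrt M \<tau> (\<Union>j. A j)"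
proof -
  have "\<forall>j. \<exists>N. N \<in> M \<and> \<tau> N = 0 \<and> A j \<subseteq> N"
    using assms(2) unfolding negligible_wrt_def by blast
  then obtain N where "\<forall>j. N j \<in> M \<and> \<tau> (N j) = 0 \<and> A j \<subseteq> N j"
    by (rule choice[THEN exE])
  then have N: "\<And>j. N j \<in> M" "\<And>j. \<tau> (N j) = 0" "\<And>j. A j \<subseteq> N j" by auto
  have "(\<Union>j. N j) \<in> M" using N(1) by (intro countable_nat_UN) auto
  moreover have "\<tau> (\<Union>j. N j) = (SUP j. \<tau> (N j))"
    using N(1) by (intro sigma_maxitive_UN[OF assms(1)]) auto
  ultimately show ?thesis unfolding negligible_wrt_def using N(2,3) by (intro bexI[of _ "\<Union>j. N j"]) auto
qed

lemma (in sigma_algebra) negligible_wrt_Un: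
  assumes "sigma_maxitive M \<tau>" "negligible_wrt M \<tau> A" "negligible_wrt M \<tau> B"
  shows "negligible_wrt M \<tau> (A \<union> B)"
proof -
  have "A \<union> B = (\<Union>j::nat. if j = 0 then A else B)" by auto
  then show ?thesis using negligible_wrt_UN[OF assms(1), of "\<lambda>j. if j = 0 then A else B"] assms(2,3)
    by simp
qed

lemma sigma_ideal_sets: "sigma_ideal M I \<Longrightarrow> I \<subseteq> M"
  by (simp add: sigma_ideal_def)

lemma sigma_ideal_UN:
  fixes F :: "nat \<Rightarrow> 'a set"
  assumes "sigma_ideal M I" "range F \<subseteq> I"
  shows "(\<Union>j. F j) \<in> I"
proof -
  have "\<forall>F :: nat \<Rightarrow> 'a set. range F \<subseteq> I \<longrightarrow> (\<Union>j. F j) \<in> I"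
    using assms(1) unfolding sigma_ideal_def by (rule conjunct1[OF conjunct2[OF conjunct2]])
  then show ?thesis using assms(2) by blast
qed

lemma sigma_ideal_subset: "sigma_ideal M I \<Longrightarrow> S \<in> I \<Longrightarrow> T \<in> M \<Longrightarrow> T \<subseteq> S \<Longrightarrow> T \<in> I"
  unfolding sigma_ideal_def by blast

lemma sigma_ideal_empty: "sigma_ideal M I \<Longrightarrow> {} \<in> M \<Longrightarrow> {} \<in> I"
  by (metis empty_subsetI equals0I sigma_ideal_def)

lemma sigma_ideal_countable_UN:
  assumes I: "sigma_ideal M I" "{} \<in> M" and K: "countable K" and G: "\<And>k. k \<in> K \<Longrightarrow> G k \<in> I"
  shows "(\<Union>k\<in>K. G k) \<in> I"
proof (cases "K = {}")
  case True
  then show ?thesis using sigma_ideal_empty[OF I] by simp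
next
  case False
  have "(\<Union>k\<in>K. G k) = (\<Union>n. G (from_nat_into K n))"
    by (metis False K image_image range_from_nat_into)
  moreover have "range (\<lambda>n. G (from_nat_into K n)) \<subseteq> I"
    using G from_nat_into[OF False] by blast
  ultimately show ?thesis using sigma_ideal_UN[OF I(1)] by simp
qed

lemma sigma_ideal_Un:
  assumes "sigma_ideal M I" "A \<in> I" "B \<in> I"
  shows "A \<union> B \<in> I"
proof -
  have "range (\<lambda>j::nat. if j = 0 then A else B) \<subseteq> I" using assms(2,3) by auto
  then have "(\<Union>j::nat. if j = 0 then A else B) \<in> I" by (rule sigma_ideal_UN[OF assms(1)])
  moreover have "(\<Union>j::nat. if j = 0 then A else B) = A \<union> B" by auto
  ultimately show ?thesis by simp
qed

lemma sigma_principalD: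
  "sigma_principal M \<tau> \<Longrightarrow> sigma_ideal M I \<Longrightarrow> \<exists>L\<in>I. \<forall>S\<in>I. negligible_wrt M \<tau> (S - L)"
  unfolding sigma_principal_def by (erule allE) (erule mp)

section \<open>The Shilkret integral\<close>

lemma maxitive_measurableD:
  "maxitive_measurable E M c \<Longrightarrow> t < \<infinity> \<Longrightarrow> {x\<in>E. t < c x} \<in> M"
  unfolding maxitive_measurable_def by blast

lemma (in sigma_algebra) maxitive_measurable_Int_level:
  "maxitive_measurable \<Omega> M c \<Longrightarrow> B \<in> M \<Longrightarrow> t < \<infinity> \<Longrightarrow> B \<inter> {x\<in>\<Omega>. t < c x} \<in> M"
  by (intro Int maxitive_measurableD)

lemma mult_le_shilkret:
  "t < \<infinity> \<Longrightarrow> t * \<tau> (B \<inter> {x\<in>E. t < c x}) \<le> shilkret E \<tau> c B"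
  unfolding shilkret_def by (rule SUP_upper) simp

lemma shilkret_leI:
  "(\<And>t. t < \<infinity> \<Longrightarrow> t * \<tau> (B \<inter> {x\<in>E. t < c x}) \<le> y) \<Longrightarrow> shilkret E \<tau> c B \<le> y"
  unfolding shilkret_def by (rule SUP_least) simp

lemma shilkret_upper_level_finite:
  assumes "0 < t" "t < \<infinity>" "shilkret E \<tau> c B < \<infinity>"
  shows "\<tau> (B \<inter> {x\<in>E. t < c x}) < \<infinity>"
proof (rule ccontr)
  assume "\<not> \<tau> (B \<inter> {x\<in>E. t < c x}) < \<infinity>"
  then have "\<tau> (B \<inter> {x\<in>E. t < c x}) = \<infinity>" by (metis less_top infinity_ennreal_def)
  then have "t * \<tau> (B \<inter> {x\<in>E. t < c x}) = \<infinity>" using assms(1) by (simp add: ennreal_mult_top)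
  then show False using mult_le_shilkret[OF assms(2), of \<tau> B E c] assms(3) by (simp add: top_unique)
qed

lemma (in sigma_algebra) maxitive_measurableI_lower_levels:
  assumes lower: "\<And>r. 0 < r \<Longrightarrow> {x\<in>\<Omega>. c x < ennreal r} \<in> M"
  shows "maxitive_measurable \<Omega> M c"
  unfolding maxitive_measurable_def
proof (intro allI impI)
  fix t :: ennreal
  let ?R = "{r\<in>\<rat>. t < ennreal r}"
  have eq: "{x\<in>\<Omega>. t < c x} = (\<Union>r\<in>?R. \<Omega> - {x\<in>\<Omega>. c x < ennreal r})"
  proof (intro set_eqI iffI)
    fix x assume x: "x \<in> {x\<in>\<Omega>. t < c x}"
    then obtain r :: rat where "t < ennreal (of_rat r)" "ennreal (of_rat r) < c x"
      using ennreal_rat_dense[of t "c x"] by blast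
    then show "x \<in> (\<Union>r\<in>?R. \<Omega> - {x\<in>\<Omega>. c x < ennreal r})"
      using x by (intro UN_I[of "of_rat r"]) auto
  qed (auto intro: order.strict_trans2)
  have "\<Omega> - {x\<in>\<Omega>. c x < ennreal r} \<in> M" if "r \<in> ?R" for r
  proof -
    have "0 < ennreal r" using that order.strict_trans1[OF zero_le, of t "ennreal r"] by blast
    then show ?thesis using lower[of r] by (intro Diff top) simp_all
  qed
  moreover have "countable ?R" by (rule countable_subset[OF _ countable_rat]) blast
  ultimately show "{x\<in>\<Omega>. t < c x} \<in> M" unfolding eq by (intro countable_UN') blast+
qed

lemma positive_level_eq_UN:
  fixes c :: "'a \<Rightarrow> ennreal"
  shows "{x\<in>E. 0 < c x} = (\<Union>n. {x\<in>E. ennreal (inverse (Suc n)) < c x})"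
proof (intro set_eqI iffI)
  fix x assume x: "x \<in> {x\<in>E. 0 < c x}"
  then obtain r :: rat where r: "0 < ennreal (real_of_rat r)" "ennreal (real_of_rat r) < c x"
    using ennreal_rat_dense by blast
  then obtain n where "inverse (real (Suc n)) < real_of_rat r"
    using reals_Archimedean[of "real_of_rat r"] by auto
  then have "ennreal (inverse (Suc n)) < c x"
    using r(2) by (metis ennreal_less_iff inverse_nonnegative_iff_nonnegative of_nat_0_le_iff order.strict_trans)
  then show "x \<in> (\<Union>n. {x\<in>E. ennreal (inverse (Suc n)) < c x})" using x by blast
qed (auto intro: order.strict_trans1[OF zero_le])

lemma (in sigma_algebra) shilkret_eq_0_iff:
  assumes \<tau>: "sigma_maxitive M \<tau>" and c: "maxitive_measurable \<Omega> M c" and B: "B \<in> M"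
  shows "shilkret \<Omega> \<tau> c B = 0 \<longleftrightarrow> \<tau> (B \<inter> {x\<in>\<Omega>. 0 < c x}) = 0"
proof
  define A where "A n = B \<inter> {x\<in>\<Omega>. ennreal (inverse (Suc n)) < c x}" for n :: nat
  have A: "A n \<in> M" for n
    unfolding A_def using c B by (rule maxitive_measurable_Int_level) simp
  assume "shilkret \<Omega> \<tau> c B = 0"
  then have "ennreal (inverse (Suc n)) * \<tau> (A n) = 0" for n
    using mult_le_shilkret[of "ennreal (inverse (Suc n))" \<tau> B \<Omega> c] unfolding A_def by simp
  then have "\<tau> (A n) = 0" for n by simp
  moreover have "B \<inter> {x\<in>\<Omega>. 0 < c x} = (\<Union>n. A n)"
    unfolding A_def positive_level_eq_UN[of \<Omega> c] by blast
  ultimately show "\<tau> (B \<inter> {x\<in>\<Omega>. 0 < c x}) = 0"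
    using sigma_maxitive_UN[OF \<tau>, of A] A by auto
next
  assume null: "\<tau> (B \<inter> {x\<in>\<Omega>. 0 < c x}) = 0"
  show "shilkret \<Omega> \<tau> c B = 0"
  proof (rule antisym[OF shilkret_leI zero_le])
    fix t :: ennreal assume t: "t < \<infinity>"
    have "\<tau> (B \<inter> {x\<in>\<Omega>. t < c x}) \<le> \<tau> (B \<inter> {x\<in>\<Omega>. 0 < c x})"
      using maxitive_measurable_Int_level[OF c B] t
      by (intro sigma_maxitive_mono[OF \<tau>]) (auto intro: order.strict_trans1[OF zero_le])
    then show "t * \<tau> (B \<inter> {x\<in>\<Omega>. t < c x}) \<le> 0" using null by simp
  qed
qed

lemma (in sigma_algebra) shilkret_eq_top:
  assumes \<tau>: "sigma_maxitive M \<tau>" and c: "maxitive_measurable \<Omega> M c" and B: "B \<in> M" and X: "X \<in> M" "X \<subseteq> B \<inter> {x\<in>\<Omega>. c x = \<infinity>}" "\<tau> X \<noteq> 0"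
  shows "shilkret \<Omega> \<tau> c B = \<infinity>"
proof -
  have "of_nat n * \<tau> X \<le> shilkret \<Omega> \<tau> c B" for n
  proof -
    have "\<tau> X \<le> \<tau> (B \<inter> {x\<in>\<Omega>. of_nat n < c x})"
      using X maxitive_measurable_Int_level[OF c B, of "of_nat n"]
      by (intro sigma_maxitive_mono[OF \<tau>]) (auto simp: of_nat_less_top)
    then have "of_nat n * \<tau> X \<le> of_nat n * \<tau> (B \<inter> {x\<in>\<Omega>. of_nat n < c x})"
      by (rule mult_left_mono) simp
    also have "\<dots> \<le> shilkret \<Omega> \<tau> c B" by (rule mult_le_shilkret) (simp add: of_nat_less_top)
    finally show ?thesis .
  qed
  then have "(SUP n. of_nat n) * \<tau> X \<le> shilkret \<Omega> \<tau> c B"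
    unfolding SUP_mult_right_ennreal by (rule SUP_least)
  then show ?thesis using X(3) by (simp add: ennreal_SUP_of_nat_eq_top ennreal_top_mult top_unique)
qed

lemma (in sigma_algebra) maxitive_measurable_top_level:
  assumes c: "maxitive_measurable \<Omega> M c"
  shows "{x\<in>\<Omega>. c x = \<infinity>} \<in> M"
proof -
  have "{x\<in>\<Omega>. c x = \<infinity>} = (\<Inter>n. {x\<in>\<Omega>. of_nat n < c x})"
  proof (intro set_eqI iffI)
    fix x assume x: "x \<in> (\<Inter>n. {x\<in>\<Omega>. of_nat n < c x})"
    have "c x = \<infinity>"
    proof (rule ccontr)
      assume "c x \<noteq> \<infinity>"
      then obtain n where "c x < of_nat n"
        using ennreal_Ex_less_of_nat by (metis infinity_ennreal_def less_top)
      then show False using x less_asym by blast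
    qed
    then show "x \<in> {x\<in>\<Omega>. c x = \<infinity>}" using x by blast
  qed (auto simp: of_nat_less_top)
  also have "\<dots> \<in> M"
  proof (rule countable_INT)
    show "range (\<lambda>n. {x\<in>\<Omega>. of_nat n < c x}) \<subseteq> M"
      using maxitive_measurableD[OF c] by (simp add: image_subset_iff of_nat_less_top)
  qed simp
  finally show ?thesis .
qed

section \<open>Rational approximation in the extended nonnegative reals\<close>

lemma ennreal_less_mult_rat_dense:
  fixes x t y :: ennreal
  assumes xty: "x < t * y" and t: "t < \<infinity>"
  obtains q :: real and b where "q \<in> \<rat>" "0 < q" "ennreal q < t" "b < y" "x < ennreal q * b"
proof -
  have y0: "y \<noteq> 0" and t0: "t \<noteq> 0" using xty by auto
  obtain q where q: "q \<in> \<rat>" "0 < q" "ennreal q < t" "x < ennreal q * y"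
  proof (cases "y = \<infinity>")
    case True
    have "0 < t" using t0 by (simp add: zero_less_iff_neq_zero)
    then obtain r :: rat where r: "0 < ennreal (of_rat r)" "ennreal (of_rat r) < t"
      using ennreal_rat_dense[of 0 t] by blast
    have "x < \<infinity>" using xty top_greatest[of "t * y"] by (simp add: less_le_trans)
    moreover have r0: "0 < (of_rat r :: real)" using r(1) by simp
    ultimately have "x < ennreal (of_rat r) * y" using True by (simp add: ennreal_mult_top)
    then show thesis using r(2) r0 by (intro that[of "of_rat r"]) simp_all
  next
    case False
    then have "x / y < t" using divide_less_ennreal[of y x t] y0 xty by (simp add: top.not_eq_extremum)
    then obtain r :: rat where r: "x / y < ennreal (of_rat r)" "ennreal (of_rat r) < t"
      using ennreal_rat_dense[of "x / y" t] by blast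
    have "0 < ennreal (of_rat r)" using r(1) by (rule order.strict_trans1[OF zero_le])
    then have "0 < (of_rat r :: real)" by simp
    moreover have "x < ennreal (of_rat r) * y"
      using r(1) divide_less_ennreal[of y x "ennreal (of_rat r)"] y0 False by (simp add: top.not_eq_extremum)
    ultimately show thesis using r(2) by (intro that[of "of_rat r"]) simp_all
  qed
  have "x / ennreal q < y" using divide_less_ennreal[of "ennreal q" x y] q by (simp add: mult.commute)
  then obtain b where b: "x / ennreal q < b" "b < y" using dense by blast
  have "x < ennreal q * b" using b(1) divide_less_ennreal[of "ennreal q" x b] q by (simp add: mult.commute)
  then show thesis using that[OF q(1-3) b(2)] by blast
qed

lemma ennreal_rat_bracket:
  fixes x :: ennreal
  assumes "0 < x" "x < \<infinity>" "1 < l"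
  obtains p where "p \<in> \<rat>" "0 < p" "ennreal p < x" "x < ennreal (l * p)"
proof -
  obtain r where r: "x = ennreal r" "0 < r" using assms(1,2) by (cases x) auto
  have "r / l < r" using r(2) assms(3) by (simp add: divide_less_eq)
  then obtain p where p: "p \<in> \<rat>" "r / l < p" "p < r" using Rats_dense_in_real by blast
  have "0 < r / l" using r(2) assms(3) by simp
  then have "0 < p" using p(2) by linarith
  moreover have "r < l * p" using p(2) assms(3) by (simp add: divide_less_eq mult.commute)
  ultimately show thesis using that[OF p(1)] p(3) r by (simp add: ennreal_less_iff)
qed

lemma ennreal_eq_0_of_le_mult:
  fixes a K :: ennreal
  assumes le: "\<And>r. 0 < r \<Longrightarrow> a \<le> ennreal r * K" and K: "K < \<infinity>"
  shows "a = 0"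
proof -
  obtain k where k: "K = ennreal k" "0 \<le> k" using K by (cases K) auto
  have "a \<le> 0"
  proof (rule ennreal_le_epsilon)
    fix e :: real assume e: "0 < e"
    have "a \<le> ennreal (e / (k + 1)) * ennreal k" using le[of "e / (k + 1)"] e k by simp
    also have "\<dots> = ennreal (e / (k + 1) * k)" using e k by (intro ennreal_mult[symmetric]) auto
    also have "\<dots> \<le> ennreal e" using e k by (intro ennreal_leI) (simp add: field_simps)
    finally show "a \<le> 0 + ennreal e" by simp
  qed
  then show ?thesis by simp
qed

lemma ennreal_le_of_le_mult:
  fixes a y :: ennreal
  assumes le: "\<And>l. 1 < l \<Longrightarrow> a \<le> ennreal l * y"
  shows "a \<le> y"
proof (rule ennreal_le_epsilon)
  fix e :: real assume y: "y < top" and e: "0 < e"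
  obtain k where k: "y = ennreal k" "0 \<le> k" using y by (cases y) auto
  have "a \<le> ennreal (1 + e / (k + 1)) * ennreal k" using le[of "1 + e / (k + 1)"] e k by simp
  also have "\<dots> = ennreal ((1 + e / (k + 1)) * k)" using e k by (intro ennreal_mult[symmetric]) auto
  also have "\<dots> \<le> ennreal (k + e)" using e k by (intro ennreal_leI) (simp add: field_simps)
  finally show "a \<le> y + ennreal e" using e k by (simp add: ennreal_plus)
qed

section \<open>Necessity of \<sigma>-finiteness and \<sigma>-principality\<close>

definition ideal_indicator :: "'a set set \<Rightarrow> 'a set \<Rightarrow> ennreal" where
  "ideal_indicator I B = (if B \<in> I then 0 else 1)"

lemma sigma_maxitive_ideal_indicator:
  assumes I: "sigma_ideal M I" "{} \<in> M"
  shows "sigma_maxitive M (ideal_indicator I)"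
  unfolding sigma_maxitive_def
proof (intro conjI allI impI)
  show "ideal_indicator I {} = 0" using sigma_ideal_empty[OF I] by (simp add: ideal_indicator_def)
  fix F :: "nat \<Rightarrow> 'a set" assume F: "range F \<subseteq> M"
  show "ideal_indicator I (\<Union>j. F j) = (SUP j. ideal_indicator I (F j))"
  proof (cases "range F \<subseteq> I")
    case True
    then have "ideal_indicator I (F j) = 0" for j by (auto simp: ideal_indicator_def)
    then show ?thesis using sigma_ideal_UN[OF I(1) True] by (simp add: ideal_indicator_def[of I "\<Union>j. F j"])
  next
    case False
    then obtain k where k: "F k \<notin> I" by auto
    then have "(\<Union>j. F j) \<notin> I" using F sigma_ideal_subset[OF I(1), of "\<Union>j. F j" "F k"] by auto
    moreover have "(SUP j. ideal_indicator I (F j)) = 1"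
    proof (rule antisym)
      show "(SUP j. ideal_indicator I (F j)) \<le> 1" by (rule SUP_least) (simp add: ideal_indicator_def)
      show "1 \<le> (SUP j. ideal_indicator I (F j))"
        using k SUP_upper[of k UNIV "\<lambda>j. ideal_indicator I (F j)"] by (simp add: ideal_indicator_def)
    qed
    ultimately show ?thesis by (simp add: ideal_indicator_def)
  qed
qed

lemma abs_cont_ideal_indicator:
  "(\<And>B. B \<in> M \<Longrightarrow> \<tau> B = 0 \<Longrightarrow> B \<in> I) \<Longrightarrow> abs_cont M (ideal_indicator I) \<tau>"
  unfolding abs_cont_def ideal_indicator_def by (auto simp: ennreal_top_mult)

lemma (in sigma_algebra) radon_nikodym_ideal_indicatorE:
  assumes rn: "radon_nikodym_property \<Omega> M \<tau>" and \<tau>: "sigma_maxitive M \<tau>"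
    and I: "sigma_ideal M I" and null: "\<And>B. B \<in> M \<Longrightarrow> \<tau> B = 0 \<Longrightarrow> B \<in> I"
  obtains c where "maxitive_measurable \<Omega> M c"
    "\<And>B. B \<in> M \<Longrightarrow> B \<in> I \<longleftrightarrow> \<tau> (B \<inter> {x\<in>\<Omega>. 0 < c x}) = 0"
    "\<And>B. B \<in> M \<Longrightarrow> shilkret \<Omega> \<tau> c B \<le> 1"
proof -
  obtain c where c: "maxitive_measurable \<Omega> M c"
    and eq: "\<And>B. B \<in> M \<Longrightarrow> ideal_indicator I B = shilkret \<Omega> \<tau> c B"
    using rn sigma_maxitive_ideal_indicator[OF I empty_sets] abs_cont_ideal_indicator[OF null]
    unfolding radon_nikodym_property_def by blast
  show ?thesis
  proof (rule that[OF c])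
    fix B assume B: "B \<in> M"
    show "B \<in> I \<longleftrightarrow> \<tau> (B \<inter> {x\<in>\<Omega>. 0 < c x}) = 0"
      using eq[OF B] shilkret_eq_0_iff[OF \<tau> c B] by (auto simp: ideal_indicator_def split: if_splits)
    show "shilkret \<Omega> \<tau> c B \<le> 1"
      using eq[OF B] by (simp add: ideal_indicator_def split: if_splits)
  qed
qed

definition sigma_finite_sets :: "'a set set \<Rightarrow> ('a set \<Rightarrow> ennreal) \<Rightarrow> 'a set set" where
  "sigma_finite_sets M \<tau> = {B\<in>M. \<exists>C. countable C \<and> C \<subseteq> {A\<in>M. \<tau> A < \<infinity>} \<and> B \<subseteq> \<Union>C}"

lemma (in sigma_algebra) sigma_ideal_sigma_finite_sets: "sigma_ideal M (sigma_finite_sets M \<tau>)"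
  unfolding sigma_ideal_def
proof (intro conjI allI impI ballI)
  show "sigma_finite_sets M \<tau> \<subseteq> M" unfolding sigma_finite_sets_def by blast
  have "{} \<in> sigma_finite_sets M \<tau>"
    unfolding sigma_finite_sets_def by (intro CollectI conjI exI[of _ "{}"]) auto
  then show "sigma_finite_sets M \<tau> \<noteq> {}" by blast
  show "T \<in> sigma_finite_sets M \<tau>" if S: "S \<in> sigma_finite_sets M \<tau>" "T \<in> M" "T \<subseteq> S" for S T
  proof -
    obtain C where "countable C" "C \<subseteq> {A\<in>M. \<tau> A < \<infinity>}" "S \<subseteq> \<Union>C"
      using S(1) unfolding sigma_finite_sets_def by blast
    then show ?thesis
      using S(2,3) unfolding sigma_finite_sets_def by (intro CollectI conjI exI[of _ C]) auto
  qed
  fix F :: "nat \<Rightarrow> 'a set" assume F: "range F \<subseteq> sigma_finite_sets M \<tau>"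
  then have "\<forall>j. \<exists>C. countable C \<and> C \<subseteq> {A\<in>M. \<tau> A < \<infinity>} \<and> F j \<subseteq> \<Union>C"
    unfolding sigma_finite_sets_def by (auto simp: image_subset_iff)
  then obtain C where C: "\<forall>j. countable (C j) \<and> C j \<subseteq> {A\<in>M. \<tau> A < \<infinity>} \<and> F j \<subseteq> \<Union>(C j)"
    by (rule choice[THEN exE])
  have "(\<Union>j. F j) \<in> M"
    using F unfolding sigma_finite_sets_def by (intro countable_nat_UN) blast
  moreover have "countable (\<Union>j. C j)" using C by auto
  moreover have "(\<Union>j. C j) \<subseteq> {A\<in>M. \<tau> A < \<infinity>}" using C by blast
  moreover have "(\<Union>j. F j) \<subseteq> \<Union>(\<Union>j. C j)"
  proof (rule UN_least)
    fix j
    have "F j \<subseteq> \<Union>(C j)" using C by blast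
    also have "\<dots> \<subseteq> \<Union>(\<Union>j. C j)" by (intro Union_mono) blast
    finally show "F j \<subseteq> \<Union>(\<Union>j. C j)" .
  qed
  ultimately show "(\<Union>j. F j) \<in> sigma_finite_sets M \<tau>"
    unfolding sigma_finite_sets_def by (intro CollectI conjI exI[of _ "\<Union>j. C j"])
qed

lemma (in sigma_algebra) maxitive_sigma_finiteI:
  assumes "\<Omega> \<in> sigma_finite_sets M \<tau>" "\<tau> {} = 0"
  shows "maxitive_sigma_finite \<Omega> M \<tau>"
proof -
  obtain C where C: "countable C" "C \<subseteq> {A\<in>M. \<tau> A < \<infinity>}" "\<Omega> \<subseteq> \<Union>C"
    using assms(1) unfolding sigma_finite_sets_def by blast
  let ?C = "insert {} C"
  have C': "countable ?C" "?C \<noteq> {}" "?C \<subseteq> {A\<in>M. \<tau> A < \<infinity>}" using C assms(2) by auto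
  have F: "range (from_nat_into ?C) = ?C" by (rule range_from_nat_into[OF C'(2,1)])
  show ?thesis
    unfolding maxitive_sigma_finite_def
  proof (intro exI[of _ "from_nat_into ?C"] conjI allI)
    show "range (from_nat_into ?C) \<subseteq> M" "\<Omega> \<subseteq> (\<Union>n. from_nat_into ?C n)"
      using F C'(3) C(3) by auto
    show "\<tau> (from_nat_into ?C n) < \<infinity>" for n
      using F C'(3) rangeI[of "from_nat_into ?C" n] by auto
  qed
qed

lemma (in sigma_algebra) radon_nikodym_imp_maxitive_sigma_finite:
  assumes rn: "radon_nikodym_property \<Omega> M \<tau>" and \<tau>: "sigma_maxitive M \<tau>"
  shows "maxitive_sigma_finite \<Omega> M \<tau>"
proof -
  let ?I = "sigma_finite_sets M \<tau>"
  have finite_in: "B \<in> ?I" if "B \<in> M" "\<tau> B < \<infinity>" for B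
    using that unfolding sigma_finite_sets_def by (intro CollectI conjI exI[of _ "{B}"]) auto
  obtain c where c: "maxitive_measurable \<Omega> M c"
    and I_iff: "\<And>B. B \<in> M \<Longrightarrow> B \<in> ?I \<longleftrightarrow> \<tau> (B \<inter> {x\<in>\<Omega>. 0 < c x}) = 0"
    and le_1: "\<And>B. B \<in> M \<Longrightarrow> shilkret \<Omega> \<tau> c B \<le> 1"
  proof (rule radon_nikodym_ideal_indicatorE[OF rn \<tau> sigma_ideal_sigma_finite_sets])
    show "B \<in> ?I" if "B \<in> M" "\<tau> B = 0" for B using finite_in that by simp
  qed (rule that)
  define A where "A n = {x\<in>\<Omega>. ennreal (inverse (Suc n)) < c x}" for n :: nat
  have "A n \<in> ?I" for n
  proof (rule finite_in)
    show "A n \<in> M" unfolding A_def by (rule maxitive_measurableD[OF c]) simp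
    have "shilkret \<Omega> \<tau> c \<Omega> < \<infinity>" using le_1[OF top] by (simp add: le_less_trans)
    then have "\<tau> (\<Omega> \<inter> A n) < \<infinity>"
      unfolding A_def by (intro shilkret_upper_level_finite[of _ \<Omega> \<tau> c \<Omega>]) auto
    then show "\<tau> (A n) < \<infinity>" unfolding A_def by (simp add: Int_absorb1)
  qed
  then have "(\<Union>n. A n) \<in> ?I" by (intro sigma_ideal_UN[OF sigma_ideal_sigma_finite_sets]) auto
  moreover have "\<Omega> - {x\<in>\<Omega>. 0 < c x} \<in> ?I"
  proof -
    have Z: "\<Omega> - {x\<in>\<Omega>. 0 < c x} \<in> M" using maxitive_measurableD[OF c] by (intro Diff top) simp
    have "(\<Omega> - {x\<in>\<Omega>. 0 < c x}) \<inter> {x\<in>\<Omega>. 0 < c x} = {}" by blast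
    then show ?thesis using I_iff[OF Z] sigma_maxitive_empty[OF \<tau>] by simp
  qed
  moreover have "\<Omega> = (\<Omega> - {x\<in>\<Omega>. 0 < c x}) \<union> (\<Union>n. A n)"
    unfolding A_def positive_level_eq_UN[of \<Omega> c] by blast
  ultimately have "\<Omega> \<in> ?I" using sigma_ideal_Un[OF sigma_ideal_sigma_finite_sets] by metis
  then show ?thesis using maxitive_sigma_finiteI sigma_maxitive_empty[OF \<tau>] by blast
qed

definition null_closure :: "'a set set \<Rightarrow> ('a set \<Rightarrow> ennreal) \<Rightarrow> 'a set set \<Rightarrow> 'a set set" where
  "null_closure M \<tau> I = {B\<in>M. \<exists>S\<in>I. negligible_wrt M \<tau> (B - S)}"

lemma (in sigma_algebra) sigma_ideal_null_closure:
  assumes \<tau>: "sigma_maxitive M \<tau>" and I: "sigma_ideal M I"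
  shows "sigma_ideal M (null_closure M \<tau> I)"
  unfolding sigma_ideal_def
proof (intro conjI allI impI ballI)
  show "null_closure M \<tau> I \<subseteq> M" unfolding null_closure_def by blast
  have "{} \<in> I" by (rule sigma_ideal_empty[OF I empty_sets])
  moreover have "negligible_wrt M \<tau> {}"
    using sigma_maxitive_empty[OF \<tau>] by (intro negligible_wrtI) auto
  ultimately have "{} \<in> null_closure M \<tau> I" unfolding null_closure_def by auto
  then show "null_closure M \<tau> I \<noteq> {}" by blast
  show "T \<in> null_closure M \<tau> I" if B: "B \<in> null_closure M \<tau> I" "T \<in> M" "T \<subseteq> B" for B T
  proof -
    obtain S where "S \<in> I" "negligible_wrt M \<tau> (B - S)" using B(1) unfolding null_closure_def by blast
    moreover have "T - S \<subseteq> B - S" using B(3) by blast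
    ultimately show ?thesis
      using B(2) negligible_wrt_subset unfolding null_closure_def by blast
  qed
  fix F :: "nat \<Rightarrow> 'a set" assume F: "range F \<subseteq> null_closure M \<tau> I"
  then have "\<forall>j. \<exists>S. S \<in> I \<and> negligible_wrt M \<tau> (F j - S)"
    unfolding null_closure_def by blast
  then obtain S where S: "\<forall>j. S j \<in> I \<and> negligible_wrt M \<tau> (F j - S j)"
    by (rule choice[THEN exE])
  have "(\<Union>j. F j) \<in> M"
    using F unfolding null_closure_def by (intro countable_nat_UN) blast
  moreover have "(\<Union>j. S j) \<in> I" using S by (intro sigma_ideal_UN[OF I]) blast
  moreover have "negligible_wrt M \<tau> (\<Union>j. F j - S j)"
    using S by (intro negligible_wrt_UN[OF \<tau>]) blast
  then have "negligible_wrt M \<tau> ((\<Union>j. F j) - (\<Union>j. S j))" by (rule negligible_wrt_subset) blast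
  ultimately show "(\<Union>j. F j) \<in> null_closure M \<tau> I" unfolding null_closure_def by blast
qed

lemma (in sigma_algebra) radon_nikodym_imp_sigma_principal:
  assumes rn: "radon_nikodym_property \<Omega> M \<tau>" and \<tau>: "sigma_maxitive M \<tau>"
  shows "sigma_principal M \<tau>"
  unfolding sigma_principal_def
proof (intro allI impI)
  fix I assume I: "sigma_ideal M I"
  let ?I = "null_closure M \<tau> I"
  obtain c where c: "maxitive_measurable \<Omega> M c"
    and I_iff: "\<And>B. B \<in> M \<Longrightarrow> B \<in> ?I \<longleftrightarrow> \<tau> (B \<inter> {x\<in>\<Omega>. 0 < c x}) = 0"
  proof (rule radon_nikodym_ideal_indicatorE[OF rn \<tau> sigma_ideal_null_closure[OF \<tau> I]])
    show "B \<in> ?I" if "B \<in> M" "\<tau> B = 0" for B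
      using that sigma_ideal_empty[OF I empty_sets] negligible_wrtI[of B M \<tau>]
      unfolding null_closure_def by (intro CollectI conjI bexI[of _ "{}"]) auto
  qed (rule that)
  let ?P = "{x\<in>\<Omega>. 0 < c x}"
  have P: "?P \<in> M" using maxitive_measurableD[OF c] by simp
  have "\<Omega> - ?P \<in> ?I"
  proof -
    have "(\<Omega> - ?P) \<inter> ?P = {}" by blast
    then show ?thesis using I_iff[of "\<Omega> - ?P"] P sigma_maxitive_empty[OF \<tau>] by auto
  qed
  then obtain L where L: "L \<in> I" "negligible_wrt M \<tau> ((\<Omega> - ?P) - L)"
    unfolding null_closure_def by blast
  show "\<exists>L\<in>I. \<forall>S\<in>I. negligible_wrt M \<tau> (S - L)"
  proof (intro bexI[OF _ L(1)] ballI)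
    fix S assume S: "S \<in> I"
    then have SM: "S \<in> M" using sigma_ideal_sets[OF I] by blast
    have "S \<in> ?I"
      using S SM negligible_wrtI[of "{}" M \<tau>] sigma_maxitive_empty[OF \<tau>]
      unfolding null_closure_def by (intro CollectI conjI bexI[of _ S]) auto
    then have "\<tau> (S \<inter> ?P) = 0" using I_iff[OF SM] by simp
    then have "negligible_wrt M \<tau> (S \<inter> ?P)" using SM P by (intro negligible_wrtI) auto
    then have "negligible_wrt M \<tau> ((S \<inter> ?P) \<union> ((\<Omega> - ?P) - L))"
      using L(2) by (rule negligible_wrt_Un[OF \<tau>])
    then show "negligible_wrt M \<tau> (S - L)"
      by (rule negligible_wrt_subset) (use SM sets_into_space in blast)
  qed
qed

section \<open>Sufficiency: construction of the density\<close>

definition dominated_sets ::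
    "'a set set \<Rightarrow> ('a set \<Rightarrow> ennreal) \<Rightarrow> ('a set \<Rightarrow> ennreal) \<Rightarrow> ennreal \<Rightarrow> 'a set set" where
  "dominated_sets M \<nu> \<tau> t = {B\<in>M. \<forall>C\<in>M. C \<subseteq> B \<longrightarrow> \<nu> C \<le> t * \<tau> C}"

lemma dominated_setsD: "B \<in> dominated_sets M \<nu> \<tau> t \<Longrightarrow> C \<in> M \<Longrightarrow> C \<subseteq> B \<Longrightarrow> \<nu> C \<le> t * \<tau> C"
  unfolding dominated_sets_def by blast

lemma dominated_sets_mono: "s \<le> t \<Longrightarrow> dominated_sets M \<nu> \<tau> s \<subseteq> dominated_sets M \<nu> \<tau> t"
  unfolding dominated_sets_def by (auto intro: order_trans[OF _ mult_right_mono])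

lemma (in sigma_algebra) sigma_ideal_dominated_sets:
  assumes \<tau>: "sigma_maxitive M \<tau>" and \<nu>: "sigma_maxitive M \<nu>"
  shows "sigma_ideal M (dominated_sets M \<nu> \<tau> t)"
  unfolding sigma_ideal_def
proof (intro conjI allI impI ballI)
  show "dominated_sets M \<nu> \<tau> t \<subseteq> M" unfolding dominated_sets_def by blast
  have "{} \<in> dominated_sets M \<nu> \<tau> t"
    unfolding dominated_sets_def using sigma_maxitive_empty[OF \<nu>] by auto
  then show "dominated_sets M \<nu> \<tau> t \<noteq> {}" by blast
  show "T \<in> dominated_sets M \<nu> \<tau> t" if "S \<in> dominated_sets M \<nu> \<tau> t" "T \<in> M" "T \<subseteq> S" for S T
    using that unfolding dominated_sets_def by blast
  fix G :: "nat \<Rightarrow> 'a set" assume G: "range G \<subseteq> dominated_sets M \<nu> \<tau> t"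
  then have GM: "G j \<in> M" for j unfolding dominated_sets_def by blast
  have "\<nu> C \<le> t * \<tau> C" if C: "C \<in> M" "C \<subseteq> (\<Union>j. G j)" for C
  proof -
    have CG: "C \<inter> G j \<in> M" for j using C(1) GM by blast
    have "C = (\<Union>j. C \<inter> G j)" using C(2) by blast
    then have "\<nu> C = \<nu> (\<Union>j. C \<inter> G j)" by simp
    also have "\<dots> = (SUP j. \<nu> (C \<inter> G j))" using CG by (intro sigma_maxitive_UN[OF \<nu>]) blast
    also have "\<dots> \<le> t * \<tau> C"
    proof (rule SUP_least)
      fix j
      have "\<nu> (C \<inter> G j) \<le> t * \<tau> (C \<inter> G j)" using G CG by (intro dominated_setsD[of "G j"]) auto
      also have "\<dots> \<le> t * \<tau> C" using sigma_maxitive_mono[OF \<tau> CG C(1)] by (intro mult_left_mono) auto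
      finally show "\<nu> (C \<inter> G j) \<le> t * \<tau> C" .
    qed
    finally show ?thesis .
  qed
  moreover have "(\<Union>j. G j) \<in> M" using GM by (intro countable_nat_UN) blast
  ultimately show "(\<Union>j. G j) \<in> dominated_sets M \<nu> \<tau> t" unfolding dominated_sets_def by blast
qed

text \<open>\<open>L q\<close> is an essential union of the sets on which \<open>\<nu> \<le> q \<cdot> \<tau>\<close> holds hereditarily,
  and \<open>c x\<close> is the infimum of the positive rationals \<open>q\<close> with \<open>x \<in> L q\<close>.\<close>

lemma (in sigma_algebra) sigma_principal_density_candidateE:
  assumes \<tau>: "sigma_maxitive M \<tau>" and \<nu>: "sigma_maxitive M \<nu>" and sp: "sigma_principal M \<tau>"
  obtains c where "maxitive_measurable \<Omega> M c"
    "\<And>r. 0 < r \<Longrightarrow> {x\<in>\<Omega>. c x < ennreal r} \<in> dominated_sets M \<nu> \<tau> (ennreal r)"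
    "\<And>q W. q \<in> \<rat> \<Longrightarrow> 0 < q \<Longrightarrow> W \<in> dominated_sets M \<nu> \<tau> (ennreal q) \<Longrightarrow> W \<subseteq> {x\<in>\<Omega>. ennreal q < c x}
      \<Longrightarrow> \<tau> W = 0"
proof -
  let ?D = "\<lambda>q. dominated_sets M \<nu> \<tau> (ennreal q)"
  have "\<forall>q. \<exists>L. L \<in> ?D q \<and> (\<forall>S\<in>?D q. negligible_wrt M \<tau> (S - L))"
    using sigma_principalD[OF sp sigma_ideal_dominated_sets[OF \<tau> \<nu>]] by blast
  then obtain L where L: "\<And>q. L q \<in> ?D q" "\<And>q S. S \<in> ?D q \<Longrightarrow> negligible_wrt M \<tau> (S - L q)"
    by metis
  have L_sets: "L q \<in> M" for q using L(1) unfolding dominated_sets_def by blast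
  define c where "c x = (INF q\<in>{q\<in>\<rat>. 0 < q \<and> x \<in> L q}. ennreal q)" for x
  have c_le: "c x \<le> ennreal q" if "q \<in> \<rat>" "0 < q" "x \<in> L q" for q x
    unfolding c_def using that by (intro INF_lower) simp
  have level: "{x\<in>\<Omega>. c x < ennreal r} = (\<Union>q\<in>{q\<in>\<rat>. 0 < q \<and> q < r}. L q)" for r
  proof (intro set_eqI iffI)
    fix x assume "x \<in> {x\<in>\<Omega>. c x < ennreal r}"
    then obtain q where "q \<in> \<rat>" "0 < q" "x \<in> L q" "ennreal q < ennreal r"
      unfolding c_def INF_less_iff by blast
    then show "x \<in> (\<Union>q\<in>{q\<in>\<rat>. 0 < q \<and> q < r}. L q)" by (auto simp: ennreal_less_iff)
  next
    fix x assume "x \<in> (\<Union>q\<in>{q\<in>\<rat>. 0 < q \<and> q < r}. L q)"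
    then obtain q where q: "q \<in> \<rat>" "0 < q" "q < r" "x \<in> L q" by blast
    then have "c x < ennreal r" using c_le[OF q(1,2,4)] by (simp add: ennreal_lessI order.strict_trans1)
    then show "x \<in> {x\<in>\<Omega>. c x < ennreal r}" using q(4) L_sets sets_into_space by blast
  qed
  have dominated: "{x\<in>\<Omega>. c x < ennreal r} \<in> ?D r" if "0 < r" for r
    unfolding level
  proof (rule sigma_ideal_countable_UN[OF sigma_ideal_dominated_sets[OF \<tau> \<nu>] empty_sets])
    show "countable {q\<in>\<rat>. 0 < q \<and> q < r}" by (rule countable_subset[OF _ countable_rat]) blast
    show "L q \<in> ?D r" if "q \<in> {q\<in>\<rat>. 0 < q \<and> q < r}" for q
      using L(1)[of q] dominated_sets_mono[of "ennreal q" "ennreal r"] that by auto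
  qed
  have "maxitive_measurable \<Omega> M c"
    using dominated unfolding dominated_sets_def by (intro maxitive_measurableI_lower_levels) blast
  moreover have "\<tau> W = 0"
    if q: "q \<in> \<rat>" "0 < q" and W: "W \<in> ?D q" "W \<subseteq> {x\<in>\<Omega>. ennreal q < c x}" for q W
  proof -
    have "W - L q = W"
    proof -
      have "x \<notin> L q" if "x \<in> W" for x
        using c_le[OF q] W(2) that by force
      then show ?thesis by blast
    qed
    then show ?thesis
      using L(2)[OF W(1)] W(1) negligible_wrt_null[OF \<tau>] unfolding dominated_sets_def by auto
  qed
  ultimately show ?thesis using that dominated by blast
qed

lemma (in sigma_algebra) sigma_ideal_trace_le:
  assumes \<tau>: "sigma_maxitive M \<tau>" and C: "C \<in> M"
  shows "sigma_ideal M {X\<in>M. \<tau> (X \<inter> C) \<le> b}"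
  unfolding sigma_ideal_def
proof (intro conjI allI impI ballI)
  show "{X\<in>M. \<tau> (X \<inter> C) \<le> b} \<subseteq> M" by blast
  have "{} \<in> {X\<in>M. \<tau> (X \<inter> C) \<le> b}" using sigma_maxitive_empty[OF \<tau>] by simp
  then show "{X\<in>M. \<tau> (X \<inter> C) \<le> b} \<noteq> {}" by blast
  show "T \<in> {X\<in>M. \<tau> (X \<inter> C) \<le> b}" if S: "S \<in> {X\<in>M. \<tau> (X \<inter> C) \<le> b}" "T \<in> M" "T \<subseteq> S" for S T
  proof -
    have "\<tau> (T \<inter> C) \<le> \<tau> (S \<inter> C)" using S C by (intro sigma_maxitive_mono[OF \<tau>]) auto
    then show ?thesis using S by auto
  qed
  fix G :: "nat \<Rightarrow> 'a set" assume G: "range G \<subseteq> {X\<in>M. \<tau> (X \<inter> C) \<le> b}"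
  have "(\<Union>j. G j) \<in> M" using G by (intro countable_nat_UN) blast
  moreover have "(\<Union>j. G j) \<inter> C = (\<Union>j. G j \<inter> C)" by blast
  moreover have "\<tau> (\<Union>j. G j \<inter> C) = (SUP j. \<tau> (G j \<inter> C))"
    using G C by (intro sigma_maxitive_UN[OF \<tau>]) blast
  moreover have "(SUP j. \<tau> (G j \<inter> C)) \<le> b" using G by (intro SUP_least) blast
  ultimately show "(\<Union>j. G j) \<in> {X\<in>M. \<tau> (X \<inter> C) \<le> b}" by simp
qed

text \<open>If \<open>\<nu> C < t \<cdot> \<tau> C\<close>, choose \<open>q < t\<close> and \<open>b < \<tau> C\<close> with \<open>\<nu> C < q \<cdot> b\<close>. An essential union
  \<open>L\<close> of the \<sigma>-ideal \<open>{X. \<tau> (X \<inter> C) \<le> b}\<close> leaves a non-null part \<open>C - L\<close>, which is not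
  \<open>q\<close>-dominated because \<open>c > q\<close> on it. A witness \<open>X \<subseteq> C - L\<close> with \<open>\<nu> X > q \<cdot> \<tau> X\<close> is
  non-null, hence \<open>\<tau> X > b\<close> and \<open>\<nu> X > q \<cdot> b > \<nu> C\<close>.\<close>

lemma (in sigma_algebra) mult_le_on_upper_level_set:
  assumes \<tau>: "sigma_maxitive M \<tau>" and \<nu>: "sigma_maxitive M \<nu>" and ac: "abs_cont M \<nu> \<tau>"
    and sp: "sigma_principal M \<tau>"
    and null: "\<And>q W. q \<in> \<rat> \<Longrightarrow> 0 < q \<Longrightarrow> W \<in> dominated_sets M \<nu> \<tau> (ennreal q)
      \<Longrightarrow> W \<subseteq> {x\<in>\<Omega>. ennreal q < c x} \<Longrightarrow> \<tau> W = 0"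
    and C: "C \<in> M" "C \<subseteq> {x\<in>\<Omega>. t < c x}" and t: "t < \<infinity>"
  shows "t * \<tau> C \<le> \<nu> C"
proof (rule ccontr)
  assume "\<not> t * \<tau> C \<le> \<nu> C"
  then obtain q b where q: "q \<in> \<rat>" "0 < q" "ennreal q < t" and b: "b < \<tau> C" "\<nu> C < ennreal q * b"
    using ennreal_less_mult_rat_dense[of "\<nu> C" t "\<tau> C"] t by (metis not_le)
  define Z where "Z = {X\<in>M. \<tau> (X \<inter> C) \<le> b}"
  obtain L where L: "L \<in> Z" "\<And>S. S \<in> Z \<Longrightarrow> negligible_wrt M \<tau> (S - L)"
    using sigma_principalD[OF sp sigma_ideal_trace_le[OF \<tau> C(1), of b]] unfolding Z_def by blast
  define W where "W = C - L"
  have LM: "L \<in> M" using L(1) unfolding Z_def by blast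
  have WM: "W \<in> M" unfolding W_def using C(1) LM by blast
  have "\<tau> W \<noteq> 0"
  proof
    assume "\<tau> W = 0"
    have "\<tau> C = \<tau> ((L \<inter> C) \<union> W)" unfolding W_def by (metis Int_commute Un_Diff_Int Un_commute)
    also have "\<dots> = max (\<tau> (L \<inter> C)) (\<tau> W)" using LM C(1) WM by (intro sigma_maxitive_Un[OF \<tau>]) auto
    also have "\<dots> \<le> b" using L(1) \<open>\<tau> W = 0\<close> unfolding Z_def by simp
    finally show False using b(1) by simp
  qed
  moreover have "W \<subseteq> {x\<in>\<Omega>. ennreal q < c x}" using C(2) q(3) unfolding W_def by (auto intro: order.strict_trans)
  ultimately have "W \<notin> dominated_sets M \<nu> \<tau> (ennreal q)" using null[OF q(1,2)] by blast
  then obtain X where X: "X \<in> M" "X \<subseteq> W" and Xq: "ennreal q * \<tau> X < \<nu> X"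
    using WM unfolding dominated_sets_def by (auto simp: not_le)
  have "\<tau> X \<noteq> 0" using Xq abs_contD[OF ac X(1)] by auto
  moreover have "X - L = X" using X(2) unfolding W_def by blast
  ultimately have "X \<notin> Z" using L(2)[of X] negligible_wrt_null[OF \<tau> X(1)] by auto
  moreover have "X \<inter> C = X" using X(2) unfolding W_def by blast
  ultimately have "b < \<tau> X" using X(1) unfolding Z_def by (auto simp: not_le)
  have "\<nu> X \<le> \<nu> C" using X C(1) unfolding W_def by (intro sigma_maxitive_mono[OF \<nu>]) auto
  also have "\<dots> < ennreal q * b" by (rule b(2))
  also have "\<dots> \<le> ennreal q * \<tau> X" using \<open>b < \<tau> X\<close> by (intro mult_left_mono) auto
  finally show False using Xq by simp
qed

lemma (in sigma_algebra) shilkret_le_measure: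
  assumes \<tau>: "sigma_maxitive M \<tau>" and \<nu>: "sigma_maxitive M \<nu>" and ac: "abs_cont M \<nu> \<tau>"
    and sp: "sigma_principal M \<tau>"
    and null: "\<And>q W. q \<in> \<rat> \<Longrightarrow> 0 < q \<Longrightarrow> W \<in> dominated_sets M \<nu> \<tau> (ennreal q)
      \<Longrightarrow> W \<subseteq> {x\<in>\<Omega>. ennreal q < c x} \<Longrightarrow> \<tau> W = 0"
    and c: "maxitive_measurable \<Omega> M c" and B: "B \<in> M"
  shows "shilkret \<Omega> \<tau> c B \<le> \<nu> B"
proof (rule shilkret_leI)
  fix t :: ennreal assume t: "t < \<infinity>"
  have BA: "B \<inter> {x\<in>\<Omega>. t < c x} \<in> M" using maxitive_measurable_Int_level[OF c B t] .
  have "t * \<tau> (B \<inter> {x\<in>\<Omega>. t < c x}) \<le> \<nu> (B \<inter> {x\<in>\<Omega>. t < c x})"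
    using BA t by (intro mult_le_on_upper_level_set[OF \<tau> \<nu> ac sp null]) auto
  also have "\<dots> \<le> \<nu> B" using BA B by (intro sigma_maxitive_mono[OF \<nu>]) auto
  finally show "t * \<tau> (B \<inter> {x\<in>\<Omega>. t < c x}) \<le> \<nu> B" .
qed

text \<open>This is where \<sigma>-finiteness is needed: on \<open>{c = 0}\<close> one only knows \<open>\<nu> \<le> r \<cdot> \<tau>\<close> for all
  \<open>r > 0\<close>.\<close>

lemma (in sigma_algebra) zero_level_null:
  assumes \<nu>: "sigma_maxitive M \<nu>" and \<tau>: "sigma_maxitive M \<tau>" and sf: "maxitive_sigma_finite \<Omega> M \<tau>"
    and c: "maxitive_measurable \<Omega> M c"
    and dom: "\<And>r. 0 < r \<Longrightarrow> {x\<in>\<Omega>. c x < ennreal r} \<in> dominated_sets M \<nu> \<tau> (ennreal r)"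
    and B: "B \<in> M"
  shows "\<nu> (B - {x\<in>\<Omega>. 0 < c x}) = 0"
proof -
  obtain F :: "nat \<Rightarrow> 'a set" where "range F \<subseteq> M \<and> (\<forall>n. \<tau> (F n) < \<infinity>) \<and> \<Omega> \<subseteq> (\<Union>n. F n)"
    using sf unfolding maxitive_sigma_finite_def by (rule exE)
  then have F: "range F \<subseteq> M" "\<And>n. \<tau> (F n) < \<infinity>" "\<Omega> \<subseteq> (\<Union>n. F n)" by auto
  let ?B0 = "B - {x\<in>\<Omega>. 0 < c x}"
  have B0F: "?B0 \<inter> F n \<in> M" for n using B F(1) maxitive_measurableD[OF c, of 0] by auto
  have "\<nu> (?B0 \<inter> F n) = 0" for n
  proof (rule ennreal_eq_0_of_le_mult[OF _ F(2)])
    fix r :: real assume r: "0 < r"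
    have "?B0 \<inter> F n \<subseteq> {x\<in>\<Omega>. c x < ennreal r}" using B sets_into_space r by auto
    then have "\<nu> (?B0 \<inter> F n) \<le> ennreal r * \<tau> (?B0 \<inter> F n)"
      by (rule dominated_setsD[OF dom[OF r] B0F])
    also have "\<dots> \<le> ennreal r * \<tau> (F n)"
      using B0F F(1) by (intro mult_left_mono sigma_maxitive_mono[OF \<tau>]) auto
    finally show "\<nu> (?B0 \<inter> F n) \<le> ennreal r * \<tau> (F n)" .
  qed
  moreover have "?B0 = (\<Union>n. ?B0 \<inter> F n)" using B sets_into_space F(3) by blast
  moreover have "\<nu> (\<Union>n. ?B0 \<inter> F n) = (SUP n. \<nu> (?B0 \<inter> F n))"
    using B0F by (intro sigma_maxitive_UN[OF \<nu>]) blast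
  ultimately show ?thesis by simp
qed

lemma (in sigma_algebra) top_level_le_shilkret:
  assumes \<nu>: "sigma_maxitive M \<nu>" and \<tau>: "sigma_maxitive M \<tau>" and ac: "abs_cont M \<nu> \<tau>"
    and c: "maxitive_measurable \<Omega> M c" and B: "B \<in> M"
  shows "\<nu> (B \<inter> {x\<in>\<Omega>. c x = \<infinity>}) \<le> shilkret \<Omega> \<tau> c B"
proof (cases "\<tau> (B \<inter> {x\<in>\<Omega>. c x = \<infinity>}) = 0")
  case True
  have "B \<inter> {x\<in>\<Omega>. c x = \<infinity>} \<in> M" using B maxitive_measurable_top_level[OF c] by blast
  then show ?thesis using abs_contD[OF ac _ True] by simp
next
  case False
  then have "shilkret \<Omega> \<tau> c B = \<infinity>"
    using B maxitive_measurable_top_level[OF c] by (intro shilkret_eq_top[OF \<tau> c B]) auto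
  then show ?thesis by simp
qed

lemma (in sigma_algebra) band_le_mult_shilkret:
  assumes \<tau>: "sigma_maxitive M \<tau>" and c: "maxitive_measurable \<Omega> M c"
    and dom: "\<And>r. 0 < r \<Longrightarrow> {x\<in>\<Omega>. c x < ennreal r} \<in> dominated_sets M \<nu> \<tau> (ennreal r)"
    and B: "B \<in> M" and p: "0 < p" and l: "0 < l"
  shows "\<nu> (B \<inter> {x\<in>\<Omega>. ennreal p < c x} \<inter> {x\<in>\<Omega>. c x < ennreal (l * p)})
    \<le> ennreal l * shilkret \<Omega> \<tau> c B"
proof -
  let ?G = "B \<inter> {x\<in>\<Omega>. ennreal p < c x} \<inter> {x\<in>\<Omega>. c x < ennreal (l * p)}"
  have Bp: "B \<inter> {x\<in>\<Omega>. ennreal p < c x} \<in> M" by (rule maxitive_measurable_Int_level[OF c B]) simp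
  have lp: "{x\<in>\<Omega>. c x < ennreal (l * p)} \<in> dominated_sets M \<nu> \<tau> (ennreal (l * p))"
    using dom p l by simp
  then have G: "?G \<in> M" using Bp unfolding dominated_sets_def by blast
  have "\<nu> ?G \<le> ennreal (l * p) * \<tau> ?G" by (rule dominated_setsD[OF lp G]) blast
  also have "\<dots> \<le> ennreal l * (ennreal p * \<tau> (B \<inter> {x\<in>\<Omega>. ennreal p < c x}))"
    using G Bp p l
    by (auto simp: ennreal_mult mult.assoc intro!: mult_left_mono sigma_maxitive_mono[OF \<tau>])
  also have "\<dots> \<le> ennreal l * shilkret \<Omega> \<tau> c B" by (intro mult_left_mono mult_le_shilkret) auto
  finally show ?thesis .
qed

lemma (in sigma_algebra) measure_le_mult_shilkret:
  assumes \<nu>: "sigma_maxitive M \<nu>" and \<tau>: "sigma_maxitive M \<tau>" and ac: "abs_cont M \<nu> \<tau>"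
    and sf: "maxitive_sigma_finite \<Omega> M \<tau>" and c: "maxitive_measurable \<Omega> M c"
    and dom: "\<And>r. 0 < r \<Longrightarrow> {x\<in>\<Omega>. c x < ennreal r} \<in> dominated_sets M \<nu> \<tau> (ennreal r)"
    and B: "B \<in> M" and l: "1 < l"
  shows "\<nu> B \<le> ennreal l * shilkret \<Omega> \<tau> c B"
proof -
  let ?s = "shilkret \<Omega> \<tau> c B"
  let ?B0 = "B - {x\<in>\<Omega>. 0 < c x}" and ?Btop = "B \<inter> {x\<in>\<Omega>. c x = \<infinity>}"
  define G where "G p = B \<inter> {x\<in>\<Omega>. ennreal p < c x} \<inter> {x\<in>\<Omega>. c x < ennreal (l * p)}" for p
  let ?K = "{p\<in>\<rat>. 0 < p}"
  let ?Bmid = "\<Union>p\<in>?K. G p"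
  have G_sets: "G p \<in> M" if "0 < p" for p
    using maxitive_measurable_Int_level[OF c B, of "ennreal p"] dom[of "l * p"] that l
    unfolding G_def dominated_sets_def by auto
  have "\<nu> ?Bmid \<le> ennreal l * ?s"
    using countable_rat G_sets band_le_mult_shilkret[OF \<tau> c dom B _ order.strict_trans[OF zero_less_one l]]
    unfolding G_def by (intro sigma_maxitive_countable_UN_le[OF \<nu>]) (auto intro: countable_subset)
  have cover: "B \<subseteq> ?B0 \<union> ?Btop \<union> ?Bmid"
  proof
    fix x assume x: "x \<in> B"
    show "x \<in> ?B0 \<union> ?Btop \<union> ?Bmid"
    proof (cases "0 < c x \<and> c x < \<infinity>")
      case True
      then obtain p where "p \<in> \<rat>" "0 < p" "ennreal p < c x" "c x < ennreal (l * p)"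
        using ennreal_rat_bracket l by blast
      then show ?thesis using x sets_into_space B unfolding G_def by blast
    qed (use x sets_into_space B in \<open>auto simp: top.not_eq_extremum\<close>)
  qed
  have sets: "?B0 \<in> M" "?Btop \<in> M" "?Bmid \<in> M"
    using B maxitive_measurableD[OF c, of 0] maxitive_measurable_top_level[OF c] G_sets countable_rat
    by (auto intro!: countable_UN' intro: countable_subset)
  have "\<nu> B \<le> \<nu> (?B0 \<union> ?Btop \<union> ?Bmid)"
    using cover sets B by (intro sigma_maxitive_mono[OF \<nu>]) auto
  also have "\<dots> = max (max (\<nu> ?B0) (\<nu> ?Btop)) (\<nu> ?Bmid)"
    using sets by (simp add: sigma_maxitive_Un[OF \<nu>] Un)
  also have "\<dots> \<le> ennreal l * ?s"
    using zero_level_null[OF \<nu> \<tau> sf c dom B] top_level_le_shilkret[OF \<nu> \<tau> ac c B] \<open>\<nu> ?Bmid \<le> _\<close> l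
    by (auto intro: order_trans[OF _ mult_right_mono[of 1 "ennreal l"]] ennreal_leI)
  finally show ?thesis .
qed

lemma (in sigma_algebra) sigma_finite_principal_imp_radon_nikodym:
  assumes \<tau>: "sigma_maxitive M \<tau>" and sf: "maxitive_sigma_finite \<Omega> M \<tau>" and sp: "sigma_principal M \<tau>"
  shows "radon_nikodym_property \<Omega> M \<tau>"
  unfolding radon_nikodym_property_def
proof (intro allI impI, elim conjE)
  fix \<nu> assume \<nu>: "sigma_maxitive M \<nu>" and ac: "abs_cont M \<nu> \<tau>"
  obtain c where c: "maxitive_measurable \<Omega> M c"
    and dom: "\<And>r. 0 < r \<Longrightarrow> {x\<in>\<Omega>. c x < ennreal r} \<in> dominated_sets M \<nu> \<tau> (ennreal r)"
    and null: "\<And>q W. q \<in> \<rat> \<Longrightarrow> 0 < q \<Longrightarrow> W \<in> dominated_sets M \<nu> \<tau> (ennreal q)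
      \<Longrightarrow> W \<subseteq> {x\<in>\<Omega>. ennreal q < c x} \<Longrightarrow> \<tau> W = 0"
    using sigma_principal_density_candidateE[OF \<tau> \<nu> sp] by blast
  have "\<nu> B = shilkret \<Omega> \<tau> c B" if B: "B \<in> M" for B
  proof (rule antisym)
    show "\<nu> B \<le> shilkret \<Omega> \<tau> c B"
      by (rule ennreal_le_of_le_mult) (rule measure_le_mult_shilkret[OF \<nu> \<tau> ac sf c dom B])
    show "shilkret \<Omega> \<tau> c B \<le> \<nu> B" by (rule shilkret_le_measure[OF \<tau> \<nu> ac sp null c B])
  qed
  then show "\<exists>c. maxitive_measurable \<Omega> M c \<and> (\<forall>B\<in>M. \<nu> B = shilkret \<Omega> \<tau> c B)"
    using c by blast
qed

theorem mainTheorem2: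
  fixes E :: "'a set" and M :: "'a set set" and \<tau> :: "'a set \<Rightarrow> ennreal"
  assumes "E \<noteq> {}"
    and "sigma_algebra E M"
    and "sigma_maxitive M \<tau>"
  shows "radon_nikodym_property E M \<tau> \<longleftrightarrow>
           (maxitive_sigma_finite E M \<tau> \<and> sigma_principal M \<tau>)"
proof -
  interpret sigma_algebra E M by (rule assms(2))
  show ?thesis
    using radon_nikodym_imp_maxitive_sigma_finite[OF _ assms(3)]
      radon_nikodym_imp_sigma_principal[OF _ assms(3)]
      sigma_finite_principal_imp_radon_nikodym[OF assms(3)]
    by blast
qed

end
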